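(* Let $\mathcal V$ be a finite state space and consider a source continuous-time discrete diffusion (continuous-time Markov chain) whose learned reverse process has reverse-rate matrix $\widetilde R_t^\theta(\mathbf y', \mathbf y)$, so that for $s = t - \Delta t$ the source backward kernel satisfies $p_{s\mid t}(\mathbf y' \mid \mathbf y) = \delta_{\mathbf y', \mathbf y} + \widetilde R_t^\theta(\mathbf y', \mathbf y)\,\Delta t + \mathcal O(\Delta t^2)$. Let $r_\phi : \mathcal V \to (0,\infty)$ be the density-ratio guidance term (approximating $\mathbb E_{\mathbf x \sim p(\cdot \mid \mathbf y)}[q(\mathbf x)/p(\mathbf x)]$, where $p$ and $q$ are the source and target data distributions sharing the same forward process), and let the target backward kernel be $$q^{\psi}_{s\mid t}(\mathbf y' \mid \mathbf y) = \frac{p_{s\mid t}(\mathbf y' \mid \mathbf y)\, r_\phi(\mathbf y')}{\sum_{\tilde{\mathbf y} \in \mathcal V} p_{s\mid t}(\tilde{\mathbf y} \mid \mathbf y)\, r_\phi(\tilde{\mathbf y})}.$$ Then $q^{\psi}_{s\mid t}(\mathbf y' \mid \mathbf y) = \delta_{\mathbf y', \mathbf y} + \widetilde R_t^\psi(\mathbf y', \mathbf y)\,\Delta t + \mathcal O(\Delta t^2)$, i.e. sampling from the target distribution is governed by the target reverse-rate matrix $$\widetilde R_t^{\psi}(\mathbf y', \mathbf y) = \begin{cases} \dfrac{r_\phi(\mathbf y')}{r_\phi(\mathbf y)}\,\widetilde R_t^\theta(\mathbf y', \mathbf y), & \mathbf y' \neq \mathbf y,\\[8pt] -\displaystyle\sum_{\tilde{\mathbf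 y} \neq \mathbf y} \dfrac{r_\phi(\tilde{\mathbf y})}{r_\phi(\mathbf y)}\,\widetilde R_t^\theta(\tilde{\mathbf y}, \mathbf y), & \mathbf y' = \mathbf y.\end{cases}$$
   Context: In the continuous-time framework, $t \in [0,T]$ is continuous, $p_{s\mid t}(\mathbf y' \mid \mathbf y) := p(\mathbf z_s = \mathbf y' \mid \mathbf z_t = \mathbf y)$ is the backward kernel, $\delta_{\mathbf y', \mathbf y}$ is the Kronecker delta, and $\mathcal O(\Delta t^2)$ denotes terms of order $\Delta t^2$ or higher as $\Delta t \to 0$. A reverse-rate matrix has nonnegative off-diagonal entries and columns summing to zero. The form of $q^{\psi}_{s\mid t}$ is the optimal target reverse kernel from ratio-based transfer: the reweighting of the source backward kernel by the ratio $r_\phi$ of the next state. *)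

theory Defs
  imports Complex_Main "HOL-Library.Landau_Symbols"
begin

text \<open>Matrices/kernels over a finite state space 'v are functions 'v => 'v => real,
  indexed as K y' y (target state y' first, current state y second), so that
  columns (fixed y) sum over y'.\<close>

definition is_rate_matrix :: "('v::finite \<Rightarrow> 'v \<Rightarrow> real) \<Rightarrow> bool" where
  "is_rate_matrix R \<longleftrightarrow> (\<forall>y' y. y' \<noteq> y \<longrightarrow> 0 \<le> R y' y) \<and> (\<forall>y. (\<Sum>y'\<in>UNIV. R y' y) = 0)"

definition is_kernel :: "('v::finite \<Rightarrow> 'v \<Rightarrow> real) \<Rightarrow> bool" where
  "is_kernel K \<longleftrightarrow> (\<forall>y' y. 0 \<le> K y' y) \<and> (\<forall>y. (\<Sum>y'\<in>UNIV. K y' y) = 1)"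

definition kron :: "'v \<Rightarrow> 'v \<Rightarrow> real" where
  "kron y' y = (if y' = y then 1 else 0)"

definition target_kernel :: "('v::finite \<Rightarrow> 'v \<Rightarrow> real) \<Rightarrow> ('v \<Rightarrow> real) \<Rightarrow> 'v \<Rightarrow> 'v \<Rightarrow> real" where
  "target_kernel P r y' y = P y' y * r y' / (\<Sum>y2\<in>UNIV. P y2 y * r y2)"

definition target_rate :: "('v::finite \<Rightarrow> 'v \<Rightarrow> real) \<Rightarrow> ('v \<Rightarrow> real) \<Rightarrow> 'v \<Rightarrow> 'v \<Rightarrow> real" where
  "target_rate R r y' y =
     (if y' \<noteq> y then r y' / r y * R y' y
      else - (\<Sum>y2\<in>UNIV - {y}. r y2 / r y * R y2 y))"

end

theory Submission
  imports Defs
begin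

text \<open>Both the numerator and the normaliser of the target kernel are first-order expansions in
  the step size h: the numerator is \<delta>(y',y) r(y') + h R(y',y) r(y') + O(h^2) and the
  normaliser is r(y) + h \<Sum> R(y2,y) r(y2) + O(h^2). Since r(y) > 0, the quotient rule for such
  expansions applies, and its first-order coefficient is exactly the target rate.\<close>

definition has_first_order_expansion ::
    "(real \<Rightarrow> real) \<Rightarrow> real \<Rightarrow> real \<Rightarrow> real filter \<Rightarrow> bool" where
  "has_first_order_expansion f a b F \<longleftrightarrow> (\<lambda>h. f h - a - b * h) \<in> O[F](\<lambda>h. h ^ 2)"

lemma has_first_order_expansion_sum:
  assumes "\<And>i. i \<in> A \<Longrightarrow> has_first_order_expansion (f i) (a i) (b i) F"
  shows "has_first_order_expansion (\<lambda>h. \<Sum>i\<in>A. f i h) (\<Sum>i\<in>A. a i) (\<Sum>i\<in>A. b i) F"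
proof -
  have "(\<lambda>h. \<Sum>i\<in>A. f i h - a i - b i * h) \<in> O[F](\<lambda>h. h ^ 2)"
    using assms by (intro big_sum_in_bigo) (simp add: has_first_order_expansion_def)
  then show ?thesis
    by (simp add: has_first_order_expansion_def sum_subtractf sum_distrib_right)
qed

lemma has_first_order_expansion_mult_const:
  assumes "has_first_order_expansion f a b F"
  shows "has_first_order_expansion (\<lambda>h. f h * c) (a * c) (b * c) F"
proof -
  have "(\<lambda>h. c * (f h - a - b * h)) \<in> O[F](\<lambda>h. h ^ 2)"
    using assms by (simp add: has_first_order_expansion_def)
  then show ?thesis
    by (simp add: has_first_order_expansion_def algebra_simps)
qed

lemma has_first_order_expansion_tendsto:
  assumes h0: "((\<lambda>h. h) \<longlongrightarrow> 0) F" and f: "has_first_order_expansion f a b F"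
  shows "(f \<longlongrightarrow> a) F"
proof -
  have "(\<lambda>h. h ^ 2) \<in> o[F](\<lambda>_. 1::real)"
    using h0 by (intro smalloI_tendsto) (auto intro!: tendsto_eq_intros)
  with f have "(\<lambda>h. f h - a - b * h) \<in> o[F](\<lambda>_. 1)"
    unfolding has_first_order_expansion_def by (rule landau_o.big_small_trans)
  then have "((\<lambda>h. f h - a - b * h) \<longlongrightarrow> 0) F"
    using smalloD_tendsto by fastforce
  then have "((\<lambda>h. (f h - a - b * h) + b * h + a) \<longlongrightarrow> 0 + b * 0 + a) F"
    using h0 by (intro tendsto_intros)
  then show ?thesis by simp
qed

lemma tendsto_nonzero_imp_inverse_bigo_1:
  fixes g :: "real \<Rightarrow> real"
  assumes "(g \<longlongrightarrow> c) F" and "c \<noteq> 0"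
  shows "(\<lambda>h. 1 / g h) \<in> O[F](\<lambda>_. 1)"
proof (rule bigoI)
  have "\<bar>c\<bar> / 2 < \<bar>c\<bar>"
    using assms(2) by simp
  then have "eventually (\<lambda>h. \<bar>g h\<bar> > \<bar>c\<bar> / 2) F"
    by (rule order_tendstoD(1)[OF tendsto_rabs[OF assms(1)]])
  then show "eventually (\<lambda>h. norm (1 / g h) \<le> 2 / \<bar>c\<bar> * norm (1::real)) F"
    by eventually_elim (use \<open>c \<noteq> 0\<close> in \<open>auto simp: field_simps\<close>)
qed

lemma has_first_order_expansion_divide:
  assumes h0: "((\<lambda>h. h) \<longlongrightarrow> 0) F"
    and f: "has_first_order_expansion f a b F"
    and g: "has_first_order_expansion g c d F"
    and "c \<noteq> 0"
  shows "has_first_order_expansion (\<lambda>h. f h / g h) (a / c) ((b * c - a * d) / c ^ 2) F"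
proof -
  define k where "k = (b * c - a * d) / c ^ 2"
  define ef where "ef = (\<lambda>h. f h - a - b * h)"
  define eg where "eg = (\<lambda>h. g h - c - d * h)"
  define rem where "rem = (\<lambda>h. ef h - d * k * h ^ 2 - eg h * (a / c + k * h))"
  have ef: "ef \<in> O[F](\<lambda>h. h ^ 2)" and eg: "eg \<in> O[F](\<lambda>h. h ^ 2)"
    using f g by (simp_all add: has_first_order_expansion_def ef_def eg_def)
  have "(\<lambda>h. a / c + k * h) \<in> O[F](\<lambda>_. 1)"
    using h0 by (intro bigoI_tendsto[where c = "a / c"]) (auto intro!: tendsto_eq_intros)
  with eg have "(\<lambda>h. eg h * (a / c + k * h)) \<in> O[F](\<lambda>h. h ^ 2 * 1)"
    by (rule landau_o.big.mult)
  with ef have rem: "rem \<in> O[F](\<lambda>h. h ^ 2)"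
    unfolding rem_def by (intro sum_in_bigo landau_o.big.mult_left) auto
  have g_lim: "(g \<longlongrightarrow> c) F"
    using h0 g by (rule has_first_order_expansion_tendsto)
  have g_inv: "(\<lambda>h. 1 / g h) \<in> O[F](\<lambda>_. 1)"
    using g_lim \<open>c \<noteq> 0\<close> by (rule tendsto_nonzero_imp_inverse_bigo_1)
  have "eventually (\<lambda>h. g h \<noteq> 0) F"
    using g_lim \<open>c \<noteq> 0\<close> by (rule tendsto_imp_eventually_ne)
  then have "eventually (\<lambda>h. rem h * (1 / g h) = f h / g h - a / c - k * h) F"
  proof eventually_elim
    case (elim h)
    \<comment> \<open>the choice of k makes the first-order terms of f - g (a/c + k h) cancel\<close>
    have "f h - g h * (a / c + k * h) = rem h"
      using \<open>c \<noteq> 0\<close>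
      by (simp add: rem_def ef_def eg_def k_def field_simps power2_eq_square)
    then show ?case
      using elim by (simp add: field_simps)
  qed
  moreover have "(\<lambda>h. rem h * (1 / g h)) \<in> O[F](\<lambda>h. h ^ 2)"
    using rem g_inv by (rule landau_o.big_1_mult)
  ultimately show ?thesis
    unfolding has_first_order_expansion_def k_def by (rule landau_o.big.in_cong[THEN iffD1])
qed

lemma sum_kron_mult:
  fixes g :: "'v::finite \<Rightarrow> real"
  shows "(\<Sum>y2\<in>UNIV. kron y2 y * g y2) = g y"
  unfolding kron_def by (simp add: if_distrib[where f = "\<lambda>x. x * _"] cong: if_cong)

lemma target_rate_eq_quotient_rule:
  assumes "r y \<noteq> 0"
  shows "target_rate R r y' y
    = (R y' y * r y' * r y - kron y' y * r y' * (\<Sum>y2\<in>UNIV. R y2 y * r y2)) / r y ^ 2"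
proof (cases "y' = y")
  case True
  have "(\<Sum>y2\<in>UNIV. R y2 y * r y2) = R y y * r y + (\<Sum>y2\<in>UNIV - {y}. R y2 y * r y2)"
    by (simp add: sum.remove[of UNIV y])
  moreover have "(\<Sum>y2\<in>UNIV - {y}. r y2 / r y * R y2 y) = (\<Sum>y2\<in>UNIV - {y}. R y2 y * r y2) / r y"
    by (simp add: sum_divide_distrib mult.commute)
  ultimately show ?thesis
    using True assms by (simp add: target_rate_def kron_def field_simps power2_eq_square)
qed (use assms in \<open>simp add: target_rate_def kron_def field_simps power2_eq_square\<close>)

theorem theorem3:
  fixes R :: "'v::finite \<Rightarrow> 'v \<Rightarrow> real"
    and P :: "real \<Rightarrow> 'v \<Rightarrow> 'v \<Rightarrow> real"
    and r :: "'v \<Rightarrow> real"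
  assumes rate: "is_rate_matrix R"
    and kernel: "eventually (\<lambda>h. is_kernel (P h)) (at_right 0)"
    and expand: "\<And>y' y. (\<lambda>h. P h y' y - kron y' y - R y' y * h) \<in> O[at_right 0](\<lambda>h. h ^ 2)"
    and rpos: "\<And>y. r y > 0"
  shows "\<And>y' y. (\<lambda>h. target_kernel (P h) r y' y - kron y' y - target_rate R r y' y * h)
                    \<in> O[at_right 0](\<lambda>h. h ^ 2)"
proof -
  fix y' y
  have P: "has_first_order_expansion (\<lambda>h. P h y2 y * r y2) (kron y2 y * r y2) (R y2 y * r y2)
      (at_right 0)" for y2
    using expand by (intro has_first_order_expansion_mult_const) (simp add: has_first_order_expansion_def)
  have "has_first_order_expansion (\<lambda>h. \<Sum>y2\<in>UNIV. P h y2 y * r y2)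
      (\<Sum>y2\<in>UNIV. kron y2 y * r y2) (\<Sum>y2\<in>UNIV. R y2 y * r y2) (at_right 0)"
    by (rule has_first_order_expansion_sum) (rule P)
  then have normaliser: "has_first_order_expansion (\<lambda>h. \<Sum>y2\<in>UNIV. P h y2 y * r y2)
      (r y) (\<Sum>y2\<in>UNIV. R y2 y * r y2) (at_right 0)"
    by (simp only: sum_kron_mult)
  have "r y \<noteq> 0"
    using rpos[of y] by simp
  have "has_first_order_expansion (\<lambda>h. target_kernel (P h) r y' y)
      (kron y' y * r y' / r y) (target_rate R r y' y) (at_right 0)"
    using has_first_order_expansion_divide[OF tendsto_ident_at P normaliser \<open>r y \<noteq> 0\<close>]
    by (simp add: target_kernel_def target_rate_eq_quotient_rule[of r, OF \<open>r y \<noteq> 0\<close>])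
  moreover have "kron y' y * r y' / r y = kron y' y"
    using \<open>r y \<noteq> 0\<close> by (simp add: kron_def)
  ultimately show "(\<lambda>h. target_kernel (P h) r y' y - kron y' y - target_rate R r y' y * h)
      \<in> O[at_right 0](\<lambda>h. h ^ 2)"
    by (simp add: has_first_order_expansion_def)
qed

end
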